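(* Let $f,g\in\mathbb{Q}[x]$ with $f\neq0$, let $d=\gcd(f,g)$, and assume $\gcd(f/d,d)=1$ and that $g(\xi)\ge0$ at every real root $\xi$ of $f$. Then there exists $b\in\mathbb{Q}[x]$ such that $b$ is relatively prime to $f/d$, $b(\xi)>0$ at every real root $\xi$ of $f/d$, and $b\,d^2\equiv g\pmod f$. *)

theory Defs
  imports "HOL-Computational_Algebra.Computational_Algebra" "HOL-Computational_Algebra.Field_as_Ring"
begin

definition real_roots :: "rat poly \<Rightarrow> real set" where
  "real_roots p = {\<xi>::real. poly (map_poly of_rat p) \<xi> = 0}"

definition rpoly :: "rat poly \<Rightarrow> real \<Rightarrow> real" where
  "rpoly p \<xi> = poly (map_poly of_rat p) \<xi>"

end

theory Submission
  imports Defs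
begin

text \<open>
  Write \<open>f = h d\<close> and \<open>g = g' d\<close> with \<open>d = gcd f g\<close>; then \<open>h\<close> is coprime both to
  \<open>g'\<close> and (by hypothesis) to \<open>d\<close>, so \<open>d\<close> has an inverse \<open>e\<close> modulo \<open>h\<close>.
  Put \<open>b = e g'\<close>: then \<open>b d\<^sup>2 - g = g' d (e d - 1)\<close> is divisible by \<open>h d = f\<close>.
  At a real root \<open>\<xi>\<close> of \<open>h\<close> we have \<open>e(\<xi>) d(\<xi>) = 1\<close> and \<open>g'(\<xi>) \<noteq> 0\<close>, hence
  \<open>b(\<xi>) = e(\<xi>)\<^sup>2 g(\<xi>)\<close> with \<open>g(\<xi>) \<noteq> 0\<close>; as \<open>\<xi>\<close> is also a root of \<open>f\<close>, \<open>g(\<xi>) > 0\<close>.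
\<close>

lemma map_poly_of_rat_add:
  "map_poly (of_rat :: rat \<Rightarrow> 'a::field_char_0) (p + q) = map_poly of_rat p + map_poly of_rat q"
  by (rule poly_eqI) (simp add: coeff_map_poly of_rat_add)

lemma map_poly_of_rat_mult:
  "map_poly (of_rat :: rat \<Rightarrow> 'a::field_char_0) (p * q) = map_poly of_rat p * map_poly of_rat q"
proof (induction p)
  case (pCons a p)
  have "map_poly (of_rat :: rat \<Rightarrow> 'a) (smult a q) = smult (of_rat a) (map_poly of_rat q)"
    by (rule poly_eqI) (simp add: coeff_map_poly of_rat_mult)
  with pCons show ?case
    by (simp add: map_poly_of_rat_add map_poly_pCons)
qed simp

lemma rpoly_add [simp]: "rpoly (p + q) \<xi> = rpoly p \<xi> + rpoly q \<xi>"
  by (simp add: rpoly_def map_poly_of_rat_add)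

lemma rpoly_mult [simp]: "rpoly (p * q) \<xi> = rpoly p \<xi> * rpoly q \<xi>"
  by (simp add: rpoly_def map_poly_of_rat_mult)

lemma rpoly_1 [simp]: "rpoly 1 \<xi> = 1"
  by (simp add: rpoly_def)

lemma real_roots_iff: "\<xi> \<in> real_roots p \<longleftrightarrow> rpoly p \<xi> = 0"
  by (simp add: real_roots_def rpoly_def)

lemma coprime_bezout:
  fixes a b :: "'a::euclidean_ring_gcd"
  assumes "coprime a b"
  obtains u v where "u * a + v * b = 1"
  using assms bezout_coefficients_fst_snd[of a b] by (metis coprime_imp_gcd_eq_1)

lemma coprime_if_bezout:
  fixes a b :: "'a::algebraic_semidom"
  assumes "u * a + v * b = 1"
  shows "coprime a b"
proof (rule coprimeI)
  fix c assume "c dvd a" and "c dvd b"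
  then have "c dvd u * a + v * b"
    by simp
  then show "is_unit c"
    by (simp add: assms)
qed

lemma bezout_inverse_square_congruence:
  fixes h d e g' :: "'a::comm_ring_1"
  assumes "u * h + e * d = 1"
  shows "h * d dvd e * g' * d\<^sup>2 - g' * d"
proof -
  have "e * g' * d\<^sup>2 - g' * d = g' * d * (e * d - 1)"
    by (simp add: power2_eq_square algebra_simps)
  also have "e * d - 1 = - (u * h)"
    using assms by (simp add: algebra_simps)
  finally have "e * g' * d\<^sup>2 - g' * d = h * d * (- (u * g'))"
    by (simp add: algebra_simps)
  then show ?thesis
    by (metis dvd_triv_left)
qed

lemma rpoly_nonzero_at_root_of_coprime:
  assumes "coprime p q" and "rpoly p \<xi> = 0"
  shows "rpoly q \<xi> \<noteq> 0"
proof
  assume "rpoly q \<xi> = 0"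
  obtain u v where "u * p + v * q = 1"
    using assms(1) by (rule coprime_bezout)
  then have "rpoly u \<xi> * rpoly p \<xi> + rpoly v \<xi> * rpoly q \<xi> = 1"
    by (metis rpoly_1 rpoly_add rpoly_mult)
  with \<open>rpoly q \<xi> = 0\<close> assms(2) show False
    by simp
qed

lemma rpoly_inverse_times_pos_at_root:
  assumes bezout: "u * h + e * d = 1"
    and "coprime h g'"
    and root: "rpoly h \<xi> = 0"
    and nonneg: "rpoly (g' * d) \<xi> \<ge> 0"
  shows "rpoly (e * g') \<xi> > 0"
proof -
  have ed: "rpoly e \<xi> * rpoly d \<xi> = 1"
    using arg_cong[OF bezout, of "\<lambda>p. rpoly p \<xi>"] root by simp
  have "rpoly g' \<xi> \<noteq> 0"
    using rpoly_nonzero_at_root_of_coprime[OF \<open>coprime h g'\<close> root] .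
  with ed have "rpoly (g' * d) \<xi> > 0"
    using nonneg by (auto simp: order_le_less)
  moreover have "rpoly (e * g') \<xi> = (rpoly e \<xi>)\<^sup>2 * rpoly (g' * d) \<xi>"
    using ed by (simp add: power2_eq_square algebra_simps)
  moreover have "rpoly e \<xi> \<noteq> 0"
    using ed by auto
  ultimately show ?thesis
    by (metis mult_pos_pos zero_less_power2)
qed

theorem mainTheorem9:
  fixes f g :: "rat poly"
  assumes "f \<noteq> 0"
    and "coprime (f div gcd f g) (gcd f g)"
    and "\<forall>\<xi>\<in>real_roots f. rpoly g \<xi> \<ge> 0"
  shows "\<exists>b :: rat poly. coprime b (f div gcd f g)
           \<and> (\<forall>\<xi>\<in>real_roots (f div gcd f g). rpoly b \<xi> > 0)
           \<and> f dvd (b * (gcd f g)^2 - g)"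
proof -
  define d where "d = gcd f g"
  define h where "h = f div d"
  define g' where "g' = g div d"
  have f_eq: "f = h * d" and g_eq: "g = g' * d"
    by (simp_all add: h_def g'_def d_def)
  have "coprime h g'"
    using div_gcd_coprime[of f g] assms(1) by (simp add: h_def g'_def d_def)
  obtain u e where bezout: "u * h + e * d = 1"
    using assms(2) coprime_bezout by (fold d_def h_def) blast
  define b where "b = e * g'"
  have "coprime b h"
    using coprime_if_bezout[of d e u h] bezout \<open>coprime h g'\<close>
    by (simp add: b_def ac_simps coprime_commute)
  moreover have "rpoly b \<xi> > 0" if "\<xi> \<in> real_roots h" for \<xi>
  proof (rule rpoly_inverse_times_pos_at_root[OF bezout \<open>coprime h g'\<close>, folded b_def])
    show root: "rpoly h \<xi> = 0"
      using that by (simp add: real_roots_iff)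
    then have "\<xi> \<in> real_roots f"
      by (simp add: f_eq real_roots_iff)
    then show "rpoly (g' * d) \<xi> \<ge> 0"
      using assms(3) g_eq by simp
  qed
  moreover have "f dvd b * d\<^sup>2 - g"
    using bezout_inverse_square_congruence[OF bezout, of g'] by (simp add: b_def f_eq g_eq)
  ultimately show ?thesis
    unfolding d_def h_def by (auto simp: coprime_commute)
qed

end
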